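(* Let $(\Sigma_k^+,d,\sigma)$ be the full one-sided shift on $k\ge 2$ symbols. Then for every $\alpha>0$, $$\widetilde h_{top}(\sigma,\Sigma_k^+)=\log k<(1+\alpha)\log k=h^\alpha_{top}(\sigma,\Sigma_k^+).$$
   Context: $\Sigma_k^+=\{0,\dots,k-1\}^{\mathbb N}$ with points $x=(x_0,x_1,\dots)$, metric $d(x,y)=e^{-n(x,y)}$ where $n(x,y)$ is the first index where $x,y$ disagree ($n(x,x)=\infty$), and $\sigma$ the left shift. For a TDS $(X,d,f)$: $d_n^\alpha(x,y)=\max_{0\le i\le n-1}e^{\alpha i}d(f^ix,f^iy)$; $r_n(f,\alpha,X,\varepsilon)$ is the minimal cardinality of a set $E$ with every $x\in X$ having some $y\in E$ with $d_n^\alpha(x,y)<\varepsilon$; $h^\alpha_{top}(f,X)=\lim_{\varepsilon\to0}\limsup_n\frac1n\log r_n(f,\alpha,X,\varepsilon)$. Neutralized topological entropy: $B_n(x,r)=\{y:d(f^jx,f^jy)<r,\ 0\le j\le n-1\}$; $r_n(X,e^{-n\varepsilon})$ is the smallest number of balls $B_n(x,e^{-n\varepsilon})$ needed to cover $X$; $\widetilde h_{top}(f,X,\varepsilon)=\limsup_{n\to\infty}\frac1n\log r_n(X,e^{-n\varepsilon})$ and $\widetilde h_{top}(f,X)=\lim_{\varepsilon\to0}\widetilde h_{top}(f,X,\varepsilon)$. *)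

theory Defs
  imports "HOL-Analysis.Analysis"
begin

definition shift_space :: "nat \<Rightarrow> (nat \<Rightarrow> nat) set" where
  "shift_space k = {x. \<forall>i. x i < k}"

definition shift :: "(nat \<Rightarrow> nat) \<Rightarrow> (nat \<Rightarrow> nat)" where
  "shift x = (\<lambda>i. x (Suc i))"

definition shift_dist :: "(nat \<Rightarrow> nat) \<Rightarrow> (nat \<Rightarrow> nat) \<Rightarrow> real" where
  "shift_dist x y = (if x = y then 0 else exp (- real (LEAST n. x n \<noteq> y n)))"

definition dist_alpha :: "('a \<Rightarrow> 'a \<Rightarrow> real) \<Rightarrow> ('a \<Rightarrow> 'a) \<Rightarrow> real \<Rightarrow> nat \<Rightarrow> 'a \<Rightarrow> 'a \<Rightarrow> real" where
  "dist_alpha d f \<alpha> n x y = (MAX i \<in> {..<n}. exp (\<alpha> * real i) * d ((f ^^ i) x) ((f ^^ i) y))"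

definition span_alpha :: "('a \<Rightarrow> 'a \<Rightarrow> real) \<Rightarrow> ('a \<Rightarrow> 'a) \<Rightarrow> real \<Rightarrow> 'a set \<Rightarrow> real \<Rightarrow> nat \<Rightarrow> nat" where
  "span_alpha d f \<alpha> X \<epsilon> n =
     Inf {card E | E. finite E \<and> E \<subseteq> X \<and> (\<forall>x\<in>X. \<exists>y\<in>E. dist_alpha d f \<alpha> n x y < \<epsilon>)}"

definition h_top_alpha :: "('a \<Rightarrow> 'a \<Rightarrow> real) \<Rightarrow> ('a \<Rightarrow> 'a) \<Rightarrow> real \<Rightarrow> 'a set \<Rightarrow> ereal" where
  "h_top_alpha d f \<alpha> X =
     Lim (at_right 0) (\<lambda>\<epsilon>. limsup (\<lambda>n. ereal (ln (real (span_alpha d f \<alpha> X \<epsilon> n)) / real n)))"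

definition bowen_ball :: "('a \<Rightarrow> 'a \<Rightarrow> real) \<Rightarrow> ('a \<Rightarrow> 'a) \<Rightarrow> nat \<Rightarrow> 'a \<Rightarrow> real \<Rightarrow> 'a set" where
  "bowen_ball d f n x r = {y. \<forall>j<n. d ((f ^^ j) x) ((f ^^ j) y) < r}"

definition cover_neutral :: "('a \<Rightarrow> 'a \<Rightarrow> real) \<Rightarrow> ('a \<Rightarrow> 'a) \<Rightarrow> 'a set \<Rightarrow> real \<Rightarrow> nat \<Rightarrow> nat" where
  "cover_neutral d f X \<epsilon> n =
     Inf {card E | E. finite E \<and> E \<subseteq> X \<and>
            X \<subseteq> (\<Union>x\<in>E. bowen_ball d f n x (exp (- real n * \<epsilon>)))}"

definition h_top_neutral_eps :: "('a \<Rightarrow> 'a \<Rightarrow> real) \<Rightarrow> ('a \<Rightarrow> 'a) \<Rightarrow> 'a set \<Rightarrow> real \<Rightarrow> ereal" where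
  "h_top_neutral_eps d f X \<epsilon> =
     limsup (\<lambda>n. ereal (ln (real (cover_neutral d f X \<epsilon> n)) / real n))"

definition h_top_neutral :: "('a \<Rightarrow> 'a \<Rightarrow> real) \<Rightarrow> ('a \<Rightarrow> 'a) \<Rightarrow> 'a set \<Rightarrow> ereal" where
  "h_top_neutral d f X = Lim (at_right 0) (\<lambda>\<epsilon>. h_top_neutral_eps d f X \<epsilon>)"

end

(*
  Both entropies are computed exactly by counting cylinders. Because the shift moves
  coordinates, d(x, y) < e^-t means agreement on the coordinates 0, ..., floor t, so the
  orbit segments of x and y stay e^(-t j)-close for j < n (t monotone) iff x and y agree on
  the first n + floor (t (n - 1)) coordinates. Any set approximating every point of the
  full shift on its first m coordinates has at least k^m points, and k^m suffice. Hence
  r_n(e^(-n eps)) = k^(n + floor (n eps)) and r_n(alpha, eps) = k^(n + floor (alpha (n - 1) - ln eps)),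
  whose exponential growth rates are (1 + eps) log k and (1 + alpha) log k; letting eps -> 0
  gives log k and (1 + alpha) log k.
*)

theory Submission
  imports Defs
begin

lemma funpow_shift: "(shift ^^ j) x = (\<lambda>i. x (i + j))"
  by (induction j arbitrary: x) (auto simp: shift_def)

lemma shift_dist_less_exp_iff:
  assumes "0 \<le> t"
  shows "shift_dist x y < exp (- t) \<longleftrightarrow> (\<forall>i \<le> nat \<lfloor>t\<rfloor>. x i = y i)"
proof (cases "x = y")
  case True
  then show ?thesis by (simp add: shift_dist_def)
next
  case False
  define L where "L = (LEAST i. x i \<noteq> y i)"
  have "\<exists>i. x i \<noteq> y i"
    using False by auto
  then have "x L \<noteq> y L"
    unfolding L_def by (rule LeastI_ex)
  moreover have "x i = y i" if "i < L" for i
    using not_less_Least that unfolding L_def by blast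
  ultimately have "(\<forall>i \<le> nat \<lfloor>t\<rfloor>. x i = y i) \<longleftrightarrow> nat \<lfloor>t\<rfloor> < L"
    by (meson le_less_trans not_le)
  also have "\<dots> \<longleftrightarrow> shift_dist x y < exp (- t)"
    using False assms by (simp add: shift_dist_def L_def nat_less_iff floor_less_iff)
  finally show ?thesis ..
qed

lemma all_windows_iff_prefix:
  fixes m :: "nat \<Rightarrow> nat"
  assumes "0 < n" and "mono m"
  shows "(\<forall>j<n. \<forall>i \<le> m j. P (i + j)) \<longleftrightarrow> (\<forall>p < n + m (n - 1). P p)"
proof
  assume windows: "\<forall>j<n. \<forall>i \<le> m j. P (i + j)"
  show "\<forall>p < n + m (n - 1). P p"
  proof (intro allI impI)
    fix p assume "p < n + m (n - 1)"
    show "P p"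
    proof (cases "p < n")
      case True
      then show ?thesis
        using windows[rule_format, of p 0] by simp
    next
      case False
      then have "p - (n - 1) \<le> m (n - 1)" and "p = p - (n - 1) + (n - 1)"
        using \<open>p < n + m (n - 1)\<close> by auto
      then show ?thesis
        using windows[rule_format, of "n - 1" "p - (n - 1)"] assms(1) by simp
    qed
  qed
next
  assume prefix: "\<forall>p < n + m (n - 1). P p"
  show "\<forall>j<n. \<forall>i \<le> m j. P (i + j)"
  proof (intro allI impI)
    fix j i assume "j < n" "i \<le> m j"
    moreover have "m j \<le> m (n - 1)"
      using \<open>j < n\<close> assms(2) by (simp add: monoD)
    ultimately show "P (i + j)" using prefix by simp
  qed
qed

definition prefix_net :: "nat \<Rightarrow> nat \<Rightarrow> (nat \<Rightarrow> nat) set \<Rightarrow> bool" where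
  "prefix_net k m E \<longleftrightarrow> finite E \<and> E \<subseteq> shift_space k \<and>
     (\<forall>x\<in>shift_space k. \<exists>y\<in>E. \<forall>i<m. x i = y i)"

lemma restrict_shift_space:
  assumes "0 < k"
  shows "(\<lambda>x. restrict x {..<m}) ` shift_space k = PiE {..<m} (\<lambda>_. {..<k})"
proof
  show "(\<lambda>x. restrict x {..<m}) ` shift_space k \<subseteq> PiE {..<m} (\<lambda>_. {..<k})"
    by (intro image_subsetI) (simp add: shift_space_def)
  show "PiE {..<m} (\<lambda>_. {..<k}) \<subseteq> (\<lambda>x. restrict x {..<m}) ` shift_space k"
  proof
    fix f assume f: "f \<in> PiE {..<m} (\<lambda>_. {..<k})"
    define x where "x i = (if i < m then f i else 0)" for i
    have "f i < k" if "i < m" for i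
      using f that by auto
    then have "x \<in> shift_space k"
      using assms by (simp add: x_def shift_space_def)
    moreover have "restrict x {..<m} = f"
      by (rule ext) (simp add: x_def PiE_arb[OF f])
    ultimately show "f \<in> (\<lambda>x. restrict x {..<m}) ` shift_space k"
      by blast
  qed
qed

lemma prefix_net_card_ge:
  assumes "0 < k" and "prefix_net k m E"
  shows "k ^ m \<le> card E"
proof -
  have "(\<lambda>x. restrict x {..<m}) ` shift_space k \<subseteq> (\<lambda>y. restrict y {..<m}) ` E"
  proof
    fix r assume "r \<in> (\<lambda>x. restrict x {..<m}) ` shift_space k"
    then obtain x where "x \<in> shift_space k" and r: "r = restrict x {..<m}"
      by blast
    then obtain y where "y \<in> E" and "\<forall>i<m. x i = y i"
      using assms(2) unfolding prefix_net_def by blast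
    then have "r = restrict y {..<m}"
      unfolding r by (intro restrict_ext) simp
    with \<open>y \<in> E\<close> show "r \<in> (\<lambda>y. restrict y {..<m}) ` E"
      by blast
  qed
  then have "PiE {..<m} (\<lambda>_. {..<k}) \<subseteq> (\<lambda>y. restrict y {..<m}) ` E"
    using restrict_shift_space[OF assms(1)] by simp
  moreover have "finite E"
    using assms(2) unfolding prefix_net_def by blast
  ultimately have "card (PiE {..<m} (\<lambda>_. {..<k})) \<le> card ((\<lambda>y. restrict y {..<m}) ` E)"
    by (intro card_mono) auto
  also have "\<dots> \<le> card E"
    using \<open>finite E\<close> by (rule card_image_le)
  finally show ?thesis
    by (simp add: card_PiE)
qed

lemma prefix_net_exists:
  assumes "0 < k"
  obtains E where "prefix_net k m E" and "card E = k ^ m"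
proof
  define extend :: "(nat \<Rightarrow> nat) \<Rightarrow> nat \<Rightarrow> nat" where
    "extend f i = (if i < m then f i else 0)" for f i
  let ?E = "extend ` PiE {..<m} (\<lambda>_. {..<k})"
  have "inj_on extend (PiE {..<m} (\<lambda>_. {..<k}))"
  proof (rule inj_onI)
    fix f g assume f: "f \<in> PiE {..<m} (\<lambda>_. {..<k})" and g: "g \<in> PiE {..<m} (\<lambda>_. {..<k})"
      and eq: "extend f = extend g"
    have "f i = g i" if "i < m" for i
      using fun_cong[OF eq, of i] that by (simp add: extend_def)
    then show "f = g"
      by (intro PiE_ext[OF f g]) simp
  qed
  then show "card ?E = k ^ m"
    by (simp add: card_image card_PiE)
  have "extend f \<in> shift_space k" if "f \<in> PiE {..<m} (\<lambda>_. {..<k})" for f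
    unfolding shift_space_def extend_def using PiE_mem[OF that] assms by auto
  moreover have "\<exists>y\<in>?E. \<forall>i<m. x i = y i" if "x \<in> shift_space k" for x
  proof
    show "extend (restrict x {..<m}) \<in> ?E"
      using that restrict_shift_space[OF assms] by blast
    show "\<forall>i<m. x i = extend (restrict x {..<m}) i"
      by (simp add: extend_def)
  qed
  ultimately show "prefix_net k m ?E"
    unfolding prefix_net_def by (auto simp: finite_PiE)
qed

lemma Inf_card_prefix_net:
  assumes "0 < k"
  shows "Inf {card E | E. prefix_net k m E} = k ^ m"
proof (rule cInf_eq_minimum)
  obtain E where "prefix_net k m E" and "card E = k ^ m"
    using prefix_net_exists[OF assms] .
  then show "k ^ m \<in> {card E | E. prefix_net k m E}"
    by force
qed (use prefix_net_card_ge[OF assms] in auto)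

lemma shift_orbit_close_iff_prefix_eq:
  fixes t :: "nat \<Rightarrow> real"
  assumes "0 < n" and "\<And>j. 0 \<le> t j" and "mono t"
  shows "(\<forall>j<n. shift_dist ((shift ^^ j) x) ((shift ^^ j) y) < exp (- t j))
     \<longleftrightarrow> (\<forall>p < n + nat \<lfloor>t (n - 1)\<rfloor>. x p = y p)"
proof -
  have "mono (\<lambda>j. nat \<lfloor>t j\<rfloor>)"
    using \<open>mono t\<close> by (intro monoI nat_mono floor_mono) (simp add: monoD)
  then show ?thesis
    using all_windows_iff_prefix[OF \<open>0 < n\<close>, of "\<lambda>j. nat \<lfloor>t j\<rfloor>" "\<lambda>p. x p = y p"]
    by (simp add: funpow_shift shift_dist_less_exp_iff assms(2))
qed

lemma bowen_ball_shift_iff: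
  assumes "0 < n" and "0 \<le> \<epsilon>"
  shows "y \<in> bowen_ball shift_dist shift n x (exp (- real n * \<epsilon>))
     \<longleftrightarrow> (\<forall>p < n + nat \<lfloor>real n * \<epsilon>\<rfloor>. y p = x p)"
proof -
  have "y \<in> bowen_ball shift_dist shift n x (exp (- real n * \<epsilon>))
     \<longleftrightarrow> (\<forall>p < n + nat \<lfloor>real n * \<epsilon>\<rfloor>. x p = y p)"
    using shift_orbit_close_iff_prefix_eq[OF \<open>0 < n\<close>, of "\<lambda>_. real n * \<epsilon>" x y] assms
    by (simp add: bowen_ball_def monoI)
  then show ?thesis
    by (auto simp: eq_commute)
qed

lemma dist_alpha_shift_less_iff:
  assumes "0 < n" and "0 \<le> \<alpha>" and "0 < \<epsilon>" and "\<epsilon> \<le> 1"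
  shows "dist_alpha shift_dist shift \<alpha> n x y < \<epsilon>
     \<longleftrightarrow> (\<forall>p < n + nat \<lfloor>\<alpha> * real (n - 1) - ln \<epsilon>\<rfloor>. x p = y p)"
proof -
  define t where "t j = \<alpha> * real j - ln \<epsilon>" for j
  have "0 \<le> t j" for j
  proof -
    have "ln \<epsilon> \<le> 0" and "0 \<le> \<alpha> * real j"
      using assms by simp_all
    then show ?thesis
      unfolding t_def by linarith
  qed
  moreover have "mono t"
    using assms(2) by (intro monoI) (simp add: t_def mult_left_mono)
  moreover have "exp (\<alpha> * real j) * D < \<epsilon> \<longleftrightarrow> D < exp (- t j)" for j D
    using \<open>0 < \<epsilon>\<close> by (simp add: t_def exp_diff mult.commute pos_less_divide_eq)
  moreover have "dist_alpha shift_dist shift \<alpha> n x y < \<epsilon> \<longleftrightarrow>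
      (\<forall>j<n. exp (\<alpha> * real j) * shift_dist ((shift ^^ j) x) ((shift ^^ j) y) < \<epsilon>)"
    unfolding dist_alpha_def using \<open>0 < n\<close> by (subst Max_less_iff) auto
  ultimately show ?thesis
    using shift_orbit_close_iff_prefix_eq[OF \<open>0 < n\<close>, of t x y] by (simp add: t_def)
qed

lemma cover_neutral_shift_space:
  assumes "0 < k" and "0 < n" and "0 \<le> \<epsilon>"
  shows "cover_neutral shift_dist shift (shift_space k) \<epsilon> n = k ^ (n + nat \<lfloor>real n * \<epsilon>\<rfloor>)"
proof -
  have "shift_space k \<subseteq> (\<Union>x\<in>E. bowen_ball shift_dist shift n x (exp (- real n * \<epsilon>)))
     \<longleftrightarrow> (\<forall>z\<in>shift_space k. \<exists>x\<in>E. \<forall>p < n + nat \<lfloor>real n * \<epsilon>\<rfloor>. z p = x p)" for E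
    unfolding subset_eq UN_iff bowen_ball_shift_iff[OF assms(2,3)] ..
  then show ?thesis
    unfolding cover_neutral_def using Inf_card_prefix_net[OF assms(1)] by (simp add: prefix_net_def)
qed

lemma span_alpha_shift_space:
  assumes "0 < k" and "0 < n" and "0 \<le> \<alpha>" and "0 < \<epsilon>" and "\<epsilon> \<le> 1"
  shows "span_alpha shift_dist shift \<alpha> (shift_space k) \<epsilon> n
     = k ^ (n + nat \<lfloor>\<alpha> * real (n - 1) - ln \<epsilon>\<rfloor>)"
  unfolding span_alpha_def dist_alpha_shift_less_iff[OF assms(2-5)]
  using Inf_card_prefix_net[OF assms(1)] by (simp add: prefix_net_def)

lemma abs_nat_floor_diff_le:
  assumes "0 \<le> x"
  shows "\<bar>real (nat \<lfloor>x\<rfloor>) - x\<bar> \<le> 1"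
proof -
  have "real (nat \<lfloor>x\<rfloor>) = of_int \<lfloor>x\<rfloor>"
    using assms by simp
  then show ?thesis
    using of_int_floor_le[of x] real_of_int_floor_add_one_gt[of x] by linarith
qed

lemma tendsto_divide_of_bounded_deviation:
  fixes f :: "nat \<Rightarrow> real"
  assumes "\<forall>\<^sub>F n in sequentially. \<bar>f n - L * real n\<bar> \<le> C"
  shows "(\<lambda>n. f n / real n) \<longlonglongrightarrow> L"
proof -
  have "\<forall>\<^sub>F n in sequentially. norm (f n / real n - L) \<le> C / real n"
    using assms eventually_gt_at_top[of 0]
  proof eventually_elim
    case (elim n)
    then have "f n / real n - L = (f n - L * real n) / real n"
      by (simp add: field_simps)
    then show ?case
      using elim by (simp add: divide_right_mono)
  qed
  then have "(\<lambda>n. f n / real n - L) \<longlonglongrightarrow> 0"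
    by (rule Lim_null_comparison) (rule lim_const_over_n)
  then show ?thesis
    by (simp add: Lim_null[symmetric])
qed

lemma limsup_ln_power_over_n:
  fixes c m :: "nat \<Rightarrow> nat"
  assumes "0 < k"
    and "\<forall>\<^sub>F n in sequentially. c n = k ^ m n"
    and "\<forall>\<^sub>F n in sequentially. \<bar>real (m n) - L * real n\<bar> \<le> C"
  shows "limsup (\<lambda>n. ereal (ln (real (c n)) / real n)) = ereal (L * ln (real k))"
proof -
  have "(\<lambda>n. real (m n) / real n * ln (real k)) \<longlonglongrightarrow> L * ln (real k)"
    using tendsto_divide_of_bounded_deviation[OF assms(3)] by (intro tendsto_intros)
  moreover have "\<forall>\<^sub>F n in sequentially. real (m n) / real n * ln (real k) = ln (real (c n)) / real n"
    using assms(2) by eventually_elim (simp add: assms(1) ln_realpow)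
  ultimately have "(\<lambda>n. ln (real (c n)) / real n) \<longlonglongrightarrow> L * ln (real k)"
    by (rule Lim_transform_eventually)
  then show ?thesis
    by (intro lim_imp_Limsup tendsto_ereal) simp_all
qed

lemma h_top_neutral_eps_shift_space:
  assumes "0 < k" and "0 \<le> \<epsilon>"
  shows "h_top_neutral_eps shift_dist shift (shift_space k) \<epsilon> = ereal ((1 + \<epsilon>) * ln (real k))"
  unfolding h_top_neutral_eps_def
proof (rule limsup_ln_power_over_n[OF assms(1)])
  show "\<forall>\<^sub>F n in sequentially. cover_neutral shift_dist shift (shift_space k) \<epsilon> n
      = k ^ (n + nat \<lfloor>real n * \<epsilon>\<rfloor>)"
    using eventually_gt_at_top[of 0] by eventually_elim (simp add: cover_neutral_shift_space assms)
  show "\<forall>\<^sub>F n in sequentially. \<bar>real (n + nat \<lfloor>real n * \<epsilon>\<rfloor>) - (1 + \<epsilon>) * real n\<bar> \<le> 1"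
    using abs_nat_floor_diff_le[of "real n * \<epsilon>" for n] assms(2) by (simp add: algebra_simps)
qed

lemma h_top_neutral_shift_space:
  assumes "0 < k"
  shows "h_top_neutral shift_dist shift (shift_space k) = ereal (ln (real k))"
proof -
  have "((\<lambda>\<epsilon>. (1 + \<epsilon>) * ln (real k)) \<longlongrightarrow> (1 + 0) * ln (real k)) (at_right 0)"
    by (intro tendsto_intros)
  then have "((\<lambda>\<epsilon>. ereal ((1 + \<epsilon>) * ln (real k))) \<longlongrightarrow> ereal (ln (real k))) (at_right 0)"
    by (intro tendsto_ereal) simp
  moreover have "\<forall>\<^sub>F \<epsilon> in at_right 0. ereal ((1 + \<epsilon>) * ln (real k))
      = h_top_neutral_eps shift_dist shift (shift_space k) \<epsilon>"
    using eventually_at_right_less[of "0::real"]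
    by eventually_elim (simp add: h_top_neutral_eps_shift_space assms)
  ultimately have "((\<lambda>\<epsilon>. h_top_neutral_eps shift_dist shift (shift_space k) \<epsilon>)
      \<longlongrightarrow> ereal (ln (real k))) (at_right 0)"
    by (rule Lim_transform_eventually)
  then show ?thesis
    unfolding h_top_neutral_def by (intro tendsto_Lim) simp_all
qed

lemma limsup_span_alpha_shift_space:
  assumes "0 < k" and "0 \<le> \<alpha>" and "0 < \<epsilon>" and "\<epsilon> \<le> 1"
  shows "limsup (\<lambda>n. ereal (ln (real (span_alpha shift_dist shift \<alpha> (shift_space k) \<epsilon> n)) / real n))
    = ereal ((1 + \<alpha>) * ln (real k))"
proof (rule limsup_ln_power_over_n[OF assms(1)])
  show "\<forall>\<^sub>F n in sequentially. span_alpha shift_dist shift \<alpha> (shift_space k) \<epsilon> n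
      = k ^ (n + nat \<lfloor>\<alpha> * real (n - 1) - ln \<epsilon>\<rfloor>)"
    using eventually_gt_at_top[of 0] by eventually_elim (simp add: span_alpha_shift_space assms)
  show "\<forall>\<^sub>F n in sequentially.
      \<bar>real (n + nat \<lfloor>\<alpha> * real (n - 1) - ln \<epsilon>\<rfloor>) - (1 + \<alpha>) * real n\<bar> \<le> 1 + \<alpha> - ln \<epsilon>"
    using eventually_gt_at_top[of 0]
  proof eventually_elim
    case (elim n)
    define X where "X = \<alpha> * real (n - 1) - ln \<epsilon>"
    have "ln \<epsilon> \<le> 0" and "0 \<le> \<alpha> * real (n - 1)"
      using assms by simp_all
    then have "0 \<le> X"
      unfolding X_def by linarith
    moreover have "X = \<alpha> * real n - \<alpha> - ln \<epsilon>"
      using elim by (simp add: X_def of_nat_diff algebra_simps)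
    moreover have "\<bar>real (nat \<lfloor>X\<rfloor>) - X\<bar> \<le> 1"
      using \<open>0 \<le> X\<close> by (rule abs_nat_floor_diff_le)
    ultimately show ?case
      unfolding X_def[symmetric] abs_le_iff of_nat_add distrib_right
      using assms(2) \<open>ln \<epsilon> \<le> 0\<close> by linarith
  qed
qed

lemma h_top_alpha_shift_space:
  assumes "0 < k" and "0 \<le> \<alpha>"
  shows "h_top_alpha shift_dist shift \<alpha> (shift_space k) = ereal ((1 + \<alpha>) * ln (real k))"
proof -
  have "\<forall>\<^sub>F \<epsilon> in at_right 0. ereal ((1 + \<alpha>) * ln (real k))
      = limsup (\<lambda>n. ereal (ln (real (span_alpha shift_dist shift \<alpha> (shift_space k) \<epsilon> n)) / real n))"
    using eventually_at_right_real[of 0 1, OF zero_less_one]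
    by eventually_elim (simp add: limsup_span_alpha_shift_space assms)
  then have "((\<lambda>\<epsilon>. limsup (\<lambda>n. ereal (ln (real (span_alpha shift_dist shift \<alpha> (shift_space k) \<epsilon> n)) / real n)))
      \<longlongrightarrow> ereal ((1 + \<alpha>) * ln (real k))) (at_right 0)"
    by (rule Lim_transform_eventually[OF tendsto_const])
  then show ?thesis
    unfolding h_top_alpha_def by (intro tendsto_Lim) simp_all
qed

theorem mainTheorem13:
  fixes k :: nat and \<alpha> :: real
  assumes "k \<ge> 2" and "\<alpha> > 0"
  shows "h_top_neutral shift_dist shift (shift_space k) = ereal (ln (real k))
       \<and> ln (real k) < (1 + \<alpha>) * ln (real k)
       \<and> h_top_alpha shift_dist shift \<alpha> (shift_space k) = ereal ((1 + \<alpha>) * ln (real k))"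
proof (intro conjI)
  have "0 < k" and "0 < ln (real k)"
    using assms(1) by simp_all
  then show "ln (real k) < (1 + \<alpha>) * ln (real k)"
    using assms(2) by simp
  show "h_top_neutral shift_dist shift (shift_space k) = ereal (ln (real k))"
    using \<open>0 < k\<close> by (rule h_top_neutral_shift_space)
  show "h_top_alpha shift_dist shift \<alpha> (shift_space k) = ereal ((1 + \<alpha>) * ln (real k))"
    using \<open>0 < k\<close> assms(2) by (simp add: h_top_alpha_shift_space)
qed

end
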